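(* The set of (restrictions to $[a,b]$ of) polynomials is dense in $(\mathcal{LP}[a,b],\|\cdot\|_{[a,b]})$.
   Context: Laplace integral on $[a,b]$: with lower/upper Laplace derivates $\underline{LD}_1F(x)$, $\overline{LD}_1F(x)$ being the minimum of the $\liminf$'s, resp. maximum of the $\limsup$'s, as $s\to\infty$ of $s^2\int_0^\delta e^{-st}[F(x+t)-F(x)]dt$ and $(-s^2)\int_0^\delta e^{-st}[F(x-t)-F(x)]dt$ (one-sided at endpoints), a major function of $f$ is a continuous $U$ with $\underline{LD}_1U\geqslant f$, $\underline{LD}_1U>-\infty$ everywhere on $[a,b]$, a minor function a continuous $V$ with $\overline{LD}_1V\leqslant f$, $\overline{LD}_1V<\infty$ everywhere, and $f$ is Laplace integrable if $\sup_V(V(b)-V(a))=\inf_U(U(b)-U(a))$ is finite, this value being $\int_a^bf$. $\mathcal{LP}[a,b]$ is the space of Laplace integrable functions on $[a,b]$ modulo a.e. equality, with the Alexiewicz norm $\|f\|_{[a,b]}=\sup_{x\in[a,b]}\left|\int_a^xf\right|$. *)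

theory Defs
  imports "HOL-Analysis.Analysis" "HOL-Computational_Algebra.Polynomial"
begin

definition LP_right :: "real \<Rightarrow> (real \<Rightarrow> real) \<Rightarrow> real \<Rightarrow> real \<Rightarrow> real" where
  "LP_right b F x s = s^2 * integral {0..b - x} (\<lambda>t. exp (-(s*t)) * (F (x + t) - F x))"

definition LP_left :: "real \<Rightarrow> (real \<Rightarrow> real) \<Rightarrow> real \<Rightarrow> real \<Rightarrow> real" where
  "LP_left a F x s = (-(s^2)) * integral {0..x - a} (\<lambda>t. exp (-(s*t)) * (F (x - t) - F x))"

definition lower_LD :: "real \<Rightarrow> real \<Rightarrow> (real \<Rightarrow> real) \<Rightarrow> real \<Rightarrow> ereal" where
  "lower_LD a b F x =
     (if x = a then Liminf at_top (\<lambda>s. ereal (LP_right b F x s))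
      else if x = b then Liminf at_top (\<lambda>s. ereal (LP_left a F x s))
      else min (Liminf at_top (\<lambda>s. ereal (LP_right b F x s)))
               (Liminf at_top (\<lambda>s. ereal (LP_left a F x s))))"

definition upper_LD :: "real \<Rightarrow> real \<Rightarrow> (real \<Rightarrow> real) \<Rightarrow> real \<Rightarrow> ereal" where
  "upper_LD a b F x =
     (if x = a then Limsup at_top (\<lambda>s. ereal (LP_right b F x s))
      else if x = b then Limsup at_top (\<lambda>s. ereal (LP_left a F x s))
      else max (Limsup at_top (\<lambda>s. ereal (LP_right b F x s)))
               (Limsup at_top (\<lambda>s. ereal (LP_left a F x s))))"

definition LP_major :: "real \<Rightarrow> real \<Rightarrow> (real \<Rightarrow> real) \<Rightarrow> (real \<Rightarrow> real) \<Rightarrow> bool" where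
  "LP_major a b f U \<longleftrightarrow> continuous_on {a..b} U \<and>
     (\<forall>x\<in>{a..b}. lower_LD a b U x \<ge> ereal (f x) \<and> lower_LD a b U x > -\<infinity>)"

definition LP_minor :: "real \<Rightarrow> real \<Rightarrow> (real \<Rightarrow> real) \<Rightarrow> (real \<Rightarrow> real) \<Rightarrow> bool" where
  "LP_minor a b f V \<longleftrightarrow> continuous_on {a..b} V \<and>
     (\<forall>x\<in>{a..b}. upper_LD a b V x \<le> ereal (f x) \<and> upper_LD a b V x < \<infinity>)"

definition LP_upper :: "real \<Rightarrow> real \<Rightarrow> (real \<Rightarrow> real) \<Rightarrow> ereal" where
  "LP_upper a b f = Inf ((\<lambda>U. ereal (U b - U a)) ` {U. LP_major a b f U})"

definition LP_lower :: "real \<Rightarrow> real \<Rightarrow> (real \<Rightarrow> real) \<Rightarrow> ereal" where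
  "LP_lower a b f = Sup ((\<lambda>V. ereal (V b - V a)) ` {V. LP_minor a b f V})"

definition LP_integrable :: "real \<Rightarrow> real \<Rightarrow> (real \<Rightarrow> real) \<Rightarrow> bool" where
  "LP_integrable a b f \<longleftrightarrow> LP_lower a b f = LP_upper a b f \<and> \<bar>LP_upper a b f\<bar> \<noteq> \<infinity>"

definition LP_integral :: "real \<Rightarrow> real \<Rightarrow> (real \<Rightarrow> real) \<Rightarrow> real" where
  "LP_integral a b f = real_of_ereal (LP_upper a b f)"

end

theory Submission
  imports Defs "HOL-Real_Asymp.Real_Asymp"
begin

text \<open>Take a major function U and a minor function V of f on [a,b] whose increments differ by less
  than \<epsilon>/2, and a polynomial P with |U - P| < \<epsilon>/4 on [a,b] (Weierstrass). The Laplace derivative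
  of a differentiable function is its derivative, so on every [a,x] the functions U - P and V - P are
  major and minor functions of f - P'; the integral of f - P' over [a,x] is therefore squeezed between
  their increments. Finally U - V is nondecreasing, since a continuous function whose right Laplace
  quotients stay eventually above a positive constant is nondecreasing; so the gap on [a,x] is at
  most the gap on [a,b], and both bounds lie within \<epsilon> of 0.\<close>

section \<open>Laplace quotients\<close>

(* Both one-sided Laplace quotients have this shape. Since s^2 * int_0^oo exp(-st) t dt = 1, it
   averages G(t)/t with weights that concentrate at t = 0 as s grows. *)
definition Laplace_quot :: "real \<Rightarrow> (real \<Rightarrow> real) \<Rightarrow> real \<Rightarrow> real" where
  "Laplace_quot d G s = s\<^sup>2 * integral {0..d} (\<lambda>t. exp (- (s * t)) * G t)"

lemma LP_right_eq_Laplace_quot: "LP_right b F x = Laplace_quot (b - x) (\<lambda>t. F (x + t) - F x)"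
  by (simp add: fun_eq_iff LP_right_def Laplace_quot_def)

lemma LP_left_eq_Laplace_quot: "LP_left a F x = Laplace_quot (x - a) (\<lambda>t. F x - F (x - t))"
proof -
  have "(\<lambda>t. exp (- (s * t)) * (F x - F (x - t))) = (\<lambda>t. - (exp (- (s * t)) * (F (x - t) - F x)))"
    for s by (simp add: fun_eq_iff algebra_simps)
  then show ?thesis by (simp add: fun_eq_iff LP_left_def Laplace_quot_def)
qed

lemma integrable_Laplace_kernel:
  fixes G :: "real \<Rightarrow> real"
  assumes "continuous_on {0..d} G"
  shows "(\<lambda>t. exp (- (s * t)) * G t) integrable_on {0..d}"
  by (rule integrable_continuous_real) (auto intro!: continuous_intros assms)

lemma Laplace_quot_add:
  assumes "continuous_on {0..d} G" "continuous_on {0..d} H"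
  shows "Laplace_quot d (\<lambda>t. G t + H t) s = Laplace_quot d G s + Laplace_quot d H s"
  using integral_add[OF integrable_Laplace_kernel[OF assms(1)] integrable_Laplace_kernel[OF assms(2)]]
  by (simp add: Laplace_quot_def distrib_left)

lemma Laplace_quot_uminus: "Laplace_quot d (\<lambda>t. - G t) s = - Laplace_quot d G s"
  by (simp add: Laplace_quot_def)

lemma Laplace_quot_cmult: "Laplace_quot d (\<lambda>t. c * G t) s = c * Laplace_quot d G s"
  by (simp add: Laplace_quot_def mult.left_commute)

lemma Laplace_quot_mono:
  assumes "continuous_on {0..d} G" "continuous_on {0..d} H" "\<And>t. t \<in> {0..d} \<Longrightarrow> G t \<le> H t"
  shows "Laplace_quot d G s \<le> Laplace_quot d H s"
  unfolding Laplace_quot_def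
  by (intro mult_left_mono integral_le integrable_Laplace_kernel assms) (auto simp: assms(3))

lemma abs_Laplace_quot_le:
  assumes "continuous_on {0..d} G" "continuous_on {0..d} H" "\<And>t. t \<in> {0..d} \<Longrightarrow> \<bar>G t\<bar> \<le> H t"
  shows "\<bar>Laplace_quot d G s\<bar> \<le> Laplace_quot d H s"
proof -
  have "Laplace_quot d G s \<le> Laplace_quot d H s" "Laplace_quot d (\<lambda>t. - G t) s \<le> Laplace_quot d H s"
    using Laplace_quot_mono[OF assms(1,2)] Laplace_quot_mono[OF continuous_on_minus[OF assms(1)] assms(2)]
      assms(3) by (auto simp: abs_le_iff)
  then show ?thesis by (simp add: Laplace_quot_uminus)
qed

lemma Laplace_quot_ident:
  assumes "s > 0" "d \<ge> 0"
  shows "Laplace_quot d (\<lambda>t. t) s = 1 - (s * d + 1) * exp (- (s * d))"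
proof -
  define F where "F t = - (t / s + 1 / s\<^sup>2) * exp (- (s * t))" for t
  have "((\<lambda>t. exp (- (s * t)) * t) has_integral (F d - F 0)) {0..d}"
  proof (rule fundamental_theorem_of_calculus[OF assms(2)])
    fix x assume "x \<in> {0..d}"
    have "(F has_real_derivative exp (- (s * x)) * x) (at x)"
      unfolding F_def using assms(1)
      by (auto intro!: derivative_eq_intros simp: field_simps power2_eq_square)
    then show "(F has_vector_derivative exp (- (s * x)) * x) (at x within {0..d})"
      by (simp add: has_real_derivative_iff_has_vector_derivative has_vector_derivative_at_within)
  qed
  then have "Laplace_quot d (\<lambda>t. t) s = s\<^sup>2 * (F d - F 0)"
    unfolding Laplace_quot_def by (simp add: integral_unique)
  also have "\<dots> = 1 - (s * d + 1) * exp (- (s * d))"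
    using assms(1) by (simp add: F_def field_simps power2_eq_square)
  finally show ?thesis .
qed

lemma tendsto_Laplace_quot_ident:
  assumes "d > 0"
  shows "(Laplace_quot d (\<lambda>t. t) \<longlongrightarrow> 1) at_top"
proof -
  have "((\<lambda>s. 1 - (s * d + 1) * exp (- (s * d))) \<longlongrightarrow> 1) at_top"
    using assms by real_asymp
  moreover have "\<forall>\<^sub>F s in at_top. 1 - (s * d + 1) * exp (- (s * d)) = Laplace_quot d (\<lambda>t. t) s"
    using eventually_gt_at_top[of 0] by eventually_elim (use assms in \<open>simp add: Laplace_quot_ident\<close>)
  ultimately show ?thesis by (simp add: tendsto_cong)
qed

lemma tendsto_Laplace_quot_tail:
  fixes G :: "real \<Rightarrow> real"
  assumes G: "continuous_on {0..d} G" and c: "0 < c" "c \<le> d"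
  shows "((\<lambda>s. Laplace_quot d G s - Laplace_quot c G s) \<longlongrightarrow> 0) at_top"
proof -
  obtain M where M: "\<And>t. t \<in> {0..d} \<Longrightarrow> \<bar>G t\<bar> \<le> M"
    using compact_imp_bounded[OF compact_continuous_image[OF G compact_Icc]]
    unfolding bounded_iff by (auto simp del: atLeastAtMost_iff)
  have bound: "\<bar>Laplace_quot d G s - Laplace_quot c G s\<bar> \<le> s\<^sup>2 * ((d - c) * (exp (- (s * c)) * M))"
    if s: "s > 0" for s
  proof -
    have split: "integral {0..c} (\<lambda>t. exp (- (s * t)) * G t) + integral {c..d} (\<lambda>t. exp (- (s * t)) * G t) =
        integral {0..d} (\<lambda>t. exp (- (s * t)) * G t)"
      using c by (intro Henstock_Kurzweil_Integration.integral_combine integrable_Laplace_kernel G) auto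
    have diff: "Laplace_quot d G s - Laplace_quot c G s = s\<^sup>2 * integral {c..d} (\<lambda>t. exp (- (s * t)) * G t)"
      unfolding Laplace_quot_def split[symmetric] by (simp add: algebra_simps)
    have "norm (integral {c..d} (\<lambda>t. exp (- (s * t)) * G t)) \<le> integral {c..d} (\<lambda>t. exp (- (s * c)) * M)"
    proof (rule integral_norm_bound_integral)
      show "(\<lambda>t. exp (- (s * t)) * G t) integrable_on {c..d}"
        using c by (intro integrable_on_subinterval[OF integrable_Laplace_kernel[OF G]]) auto
      fix t assume t: "t \<in> {c..d}"
      then have "\<bar>G t\<bar> \<le> M" using c M by auto
      with t s show "norm (exp (- (s * t)) * G t) \<le> exp (- (s * c)) * M"
        by (auto simp: abs_mult intro!: mult_mono)
    qed (intro integrable_continuous_interval continuous_intros)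
    also have "\<dots> = (d - c) * (exp (- (s * c)) * M)"
      using c by simp
    finally have "\<bar>integral {c..d} (\<lambda>t. exp (- (s * t)) * G t)\<bar> \<le> (d - c) * (exp (- (s * c)) * M)"
      by simp
    from mult_left_mono[OF this, of "s\<^sup>2"] show ?thesis
      by (simp add: diff abs_mult)
  qed
  have "((\<lambda>s. s\<^sup>2 * ((d - c) * (exp (- (s * c)) * M))) \<longlongrightarrow> 0) at_top"
    using c by real_asymp
  then show ?thesis
    by (rule Lim_null_comparison[rotated])
      (use eventually_gt_at_top[of 0] in \<open>eventually_elim, use bound in simp\<close>)
qed

lemma tendsto_Laplace_quot_0:
  fixes G :: "real \<Rightarrow> real"
  assumes d: "d > 0" and G: "continuous_on {0..d} G" and G0: "G 0 = 0"
    and deriv: "(G has_real_derivative 0) (at 0 within {0..d})"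
  shows "(Laplace_quot d G \<longlongrightarrow> 0) at_top"
proof (rule tendstoI)
  fix e :: real assume e: "e > 0"
  have "\<forall>\<^sub>F t in at 0 within {0..d}. dist (G t / t) 0 < e / 2"
    using tendstoD[OF deriv[unfolded has_field_derivative_iff] half_gt_zero[OF e]] G0 by simp
  then obtain \<delta> where \<delta>: "\<delta> > 0"
    and small: "\<And>t. t \<in> {0..d} \<Longrightarrow> t \<noteq> 0 \<Longrightarrow> t < \<delta> \<Longrightarrow> \<bar>G t / t\<bar> < e / 2"
    unfolding eventually_at by (auto simp: dist_real_def)
  define h where "h = min (\<delta> / 2) d"
  have h: "0 < h" "h \<le> d" using \<delta> d by (auto simp: h_def)
  have Gh: "continuous_on {0..h} G" using G h by (auto intro: continuous_on_subset)
  have linear_bound: "\<bar>G t\<bar> \<le> e / 2 * t" if "t \<in> {0..h}" for t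
  proof (cases "t = 0")
    case False
    with that h small[of t] \<delta> have "\<bar>G t\<bar> / t < e / 2" by (auto simp: h_def abs_div)
    with False that show ?thesis by (simp add: field_simps)
  qed (simp add: G0)
  have near: "\<bar>Laplace_quot h G s\<bar> \<le> e / 2" if "s > 0" for s
  proof -
    have "\<bar>Laplace_quot h G s\<bar> \<le> Laplace_quot h (\<lambda>t. e / 2 * t) s"
      by (rule abs_Laplace_quot_le[OF Gh _ linear_bound]) (intro continuous_intros)
    also have "\<dots> = e / 2 * Laplace_quot h (\<lambda>t. t) s"
      by (rule Laplace_quot_cmult)
    also have "\<dots> \<le> e / 2"
      using that h e by (simp add: Laplace_quot_ident)
    finally show ?thesis .
  qed
  have "\<forall>\<^sub>F s in at_top. \<bar>Laplace_quot d G s - Laplace_quot h G s\<bar> < e / 2"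
    using tendstoD[OF tendsto_Laplace_quot_tail[OF G h] half_gt_zero[OF e]] by (simp add: dist_real_def)
  then show "\<forall>\<^sub>F s in at_top. dist (Laplace_quot d G s) 0 < e"
    using eventually_gt_at_top[of 0]
  proof eventually_elim
    case (elim s)
    with near[of s] abs_triangle_ineq[of "Laplace_quot d G s - Laplace_quot h G s" "Laplace_quot h G s"]
    show ?case by (simp add: dist_real_def)
  qed
qed

lemma tendsto_Laplace_quot:
  fixes G :: "real \<Rightarrow> real"
  assumes d: "d > 0" and G: "continuous_on {0..d} G" and G0: "G 0 = 0"
    and deriv: "(G has_real_derivative D) (at 0 within {0..d})"
  shows "(Laplace_quot d G \<longlongrightarrow> D) at_top"
proof -
  define r where "r t = G t - D * t" for t
  have r: "continuous_on {0..d} r" using G by (auto simp: r_def intro!: continuous_intros)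
  have "(r has_real_derivative 0) (at 0 within {0..d})"
    using deriv unfolding r_def by (auto intro!: derivative_eq_intros)
  then have "(Laplace_quot d r \<longlongrightarrow> 0) at_top"
    using tendsto_Laplace_quot_0[OF d r] G0 by (simp add: r_def)
  then have "((\<lambda>s. D * Laplace_quot d (\<lambda>t. t) s + Laplace_quot d r s) \<longlongrightarrow> D * 1 + 0) at_top"
    by (intro tendsto_intros tendsto_Laplace_quot_ident d)
  moreover have "Laplace_quot d G = (\<lambda>s. D * Laplace_quot d (\<lambda>t. t) s + Laplace_quot d r s)"
  proof (rule ext)
    fix s
    have "Laplace_quot d G s = Laplace_quot d (\<lambda>t. D * t + r t) s" by (simp add: r_def)
    also have "\<dots> = D * Laplace_quot d (\<lambda>t. t) s + Laplace_quot d r s"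
      using r by (simp add: Laplace_quot_add Laplace_quot_cmult continuous_intros)
    finally show "Laplace_quot d G s = D * Laplace_quot d (\<lambda>t. t) s + Laplace_quot d r s" .
  qed
  ultimately show ?thesis by simp
qed

lemma continuous_on_LP_right_integrand:
  fixes F :: "real \<Rightarrow> real"
  assumes "continuous_on {x..b} F"
  shows "continuous_on {0..b - x} (\<lambda>t. F (x + t) - F x)"
  by (intro continuous_intros continuous_on_compose2[OF assms]) auto

lemma continuous_on_LP_left_integrand:
  fixes F :: "real \<Rightarrow> real"
  assumes "continuous_on {a..x} F"
  shows "continuous_on {0..x - a} (\<lambda>t. F x - F (x - t))"
  by (intro continuous_intros continuous_on_compose2[OF assms]) auto

lemma LP_right_add:
  fixes F G :: "real \<Rightarrow> real"
  assumes "continuous_on {x..b} F" "continuous_on {x..b} G"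
  shows "LP_right b (\<lambda>t. F t + G t) x s = LP_right b F x s + LP_right b G x s"
proof -
  have "(\<lambda>t. F (x + t) + G (x + t) - (F x + G x)) = (\<lambda>t. (F (x + t) - F x) + (G (x + t) - G x))"
    by (simp add: fun_eq_iff)
  then show ?thesis
    unfolding LP_right_eq_Laplace_quot
    by (simp add: Laplace_quot_add continuous_on_LP_right_integrand assms)
qed

lemma LP_left_add:
  fixes F G :: "real \<Rightarrow> real"
  assumes "continuous_on {a..x} F" "continuous_on {a..x} G"
  shows "LP_left a (\<lambda>t. F t + G t) x s = LP_left a F x s + LP_left a G x s"
proof -
  have "(\<lambda>t. F x + G x - (F (x - t) + G (x - t))) = (\<lambda>t. (F x - F (x - t)) + (G x - G (x - t)))"
    by (simp add: fun_eq_iff)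
  then show ?thesis
    unfolding LP_left_eq_Laplace_quot
    by (simp add: Laplace_quot_add continuous_on_LP_left_integrand assms)
qed

lemma LP_right_uminus: "LP_right b (\<lambda>t. - F t) x s = - LP_right b F x s"
  using Laplace_quot_uminus[of "b - x" "\<lambda>t. F (x + t) - F x"] by (simp add: LP_right_eq_Laplace_quot)

lemma LP_left_uminus: "LP_left a (\<lambda>t. - F t) x s = - LP_left a F x s"
  using Laplace_quot_uminus[of "x - a" "\<lambda>t. F x - F (x - t)"] by (simp add: LP_left_eq_Laplace_quot)

lemma LP_right_diff:
  fixes F G :: "real \<Rightarrow> real"
  assumes "continuous_on {x..b} F" "continuous_on {x..b} G"
  shows "LP_right b (\<lambda>t. F t - G t) x s = LP_right b F x s - LP_right b G x s"
  using LP_right_add[OF assms(1) continuous_on_minus[OF assms(2)]] by (simp add: LP_right_uminus)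

lemma LP_left_diff:
  fixes F G :: "real \<Rightarrow> real"
  assumes "continuous_on {a..x} F" "continuous_on {a..x} G"
  shows "LP_left a (\<lambda>t. F t - G t) x s = LP_left a F x s - LP_left a G x s"
  using LP_left_add[OF assms(1) continuous_on_minus[OF assms(2)]] by (simp add: LP_left_uminus)

lemma tendsto_LP_right:
  fixes F :: "real \<Rightarrow> real"
  assumes y: "y < b" and F: "continuous_on {y..b} F"
    and deriv: "(F has_real_derivative D) (at y within {y..b})"
  shows "(LP_right b F y \<longlongrightarrow> D) at_top"
  unfolding LP_right_eq_Laplace_quot
proof (rule tendsto_Laplace_quot)
  have "((\<lambda>x. F x - F y) \<circ> (+) y has_real_derivative D * 1) (at 0 within {0..b - y})"
    using deriv by (intro DERIV_image_chain) (auto intro!: derivative_eq_intros)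
  then show "((\<lambda>t. F (y + t) - F y) has_real_derivative D) (at 0 within {0..b - y})"
    by (simp add: o_def)
qed (use y continuous_on_LP_right_integrand[OF F] in auto)

lemma tendsto_LP_left:
  fixes F :: "real \<Rightarrow> real"
  assumes y: "a < y" and F: "continuous_on {a..y} F"
    and deriv: "(F has_real_derivative D) (at y within {a..y})"
  shows "(LP_left a F y \<longlongrightarrow> D) at_top"
  unfolding LP_left_eq_Laplace_quot
proof (rule tendsto_Laplace_quot)
  have "((\<lambda>x. F y - F x) \<circ> (-) y has_real_derivative - D * - 1) (at 0 within {0..y - a})"
    using deriv by (intro DERIV_image_chain) (auto intro!: derivative_eq_intros)
  then show "((\<lambda>t. F y - F (y - t)) has_real_derivative D) (at 0 within {0..y - a})"
    by (simp add: o_def)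
qed (use y continuous_on_LP_left_integrand[OF F] in auto)

lemma tendsto_LP_right_restrict:
  fixes F :: "real \<Rightarrow> real"
  assumes "continuous_on {y..b} F" "y < x" "x \<le> b"
  shows "((\<lambda>s. LP_right b F y s - LP_right x F y s) \<longlongrightarrow> 0) at_top"
  using tendsto_Laplace_quot_tail[OF continuous_on_LP_right_integrand[OF assms(1)], of "x - y"] assms(2,3)
  by (simp add: LP_right_eq_Laplace_quot)

section \<open>Major and minor functions\<close>

(* Real-valued form of a lower bound on the Liminf, to keep extended reals out of the arguments. *)
definition liminf_at_top_ge :: "(real \<Rightarrow> real) \<Rightarrow> real \<Rightarrow> bool" where
  "liminf_at_top_ge g c \<longleftrightarrow> (\<forall>z<c. \<forall>\<^sub>F s in at_top. z < g s)"

lemma Liminf_ge_iff_liminf_at_top_ge: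
  "ereal c \<le> Liminf at_top (\<lambda>s. ereal (g s)) \<longleftrightarrow> liminf_at_top_ge g c"
  unfolding le_Liminf_iff liminf_at_top_ge_def
proof safe
  fix z assume "\<forall>y<ereal c. \<forall>\<^sub>F s in at_top. y < ereal (g s)" "z < c"
  then show "\<forall>\<^sub>F s in at_top. z < g s" by (auto elim!: allE[of _ "ereal z"])
next
  fix y assume "\<forall>z<c. \<forall>\<^sub>F s in at_top. z < g s" "y < ereal c"
  then show "\<forall>\<^sub>F s in at_top. y < ereal (g s)" by (cases y) auto
qed

lemma liminf_at_top_ge_tendsto_diff:
  assumes "liminf_at_top_ge g c" "((\<lambda>s. g s - h s) \<longlongrightarrow> L) at_top"
  shows "liminf_at_top_ge h (c - L)"
  unfolding liminf_at_top_ge_def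
proof safe
  fix z assume z: "z < c - L"
  define m where "m = (c - L - z) / 2"
  have m: "m > 0" using z by (simp add: m_def)
  have "\<forall>\<^sub>F s in at_top. c - m < g s" using assms(1) m unfolding liminf_at_top_ge_def by auto
  moreover have "\<forall>\<^sub>F s in at_top. dist (g s - h s) L < m" using tendstoD[OF assms(2) m] .
  ultimately show "\<forall>\<^sub>F s in at_top. z < h s"
  proof eventually_elim
    case (elim s)
    then show ?case unfolding dist_real_def abs_less_iff m_def by (auto simp: field_simps)
  qed
qed

lemma ge_lower_LD_iff:
  assumes "a < b"
  shows "ereal c \<le> lower_LD a b F x \<longleftrightarrow>
    (x \<noteq> b \<longrightarrow> liminf_at_top_ge (LP_right b F x) c) \<and> (x \<noteq> a \<longrightarrow> liminf_at_top_ge (LP_left a F x) c)"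
  using assms by (auto simp: lower_LD_def Liminf_ge_iff_liminf_at_top_ge[symmetric])

lemma LP_major_iff:
  assumes "a < b"
  shows "LP_major a b f U \<longleftrightarrow> continuous_on {a..b} U \<and>
    (\<forall>x\<in>{a..<b}. liminf_at_top_ge (LP_right b U x) (f x)) \<and>
    (\<forall>x\<in>{a<..b}. liminf_at_top_ge (LP_left a U x) (f x))"
proof -
  have "- \<infinity> < lower_LD a b U x" if "ereal (f x) \<le> lower_LD a b U x" for x
    using that by (rule less_le_trans[rotated]) simp
  then show ?thesis
    unfolding LP_major_def ge_lower_LD_iff[OF assms] by auto
qed

lemma upper_LD_eq_uminus_lower_LD: "upper_LD a b V x = - lower_LD a b (\<lambda>t. - V t) x"
  by (auto simp: upper_LD_def lower_LD_def LP_right_uminus LP_left_uminus ereal_Liminf_uminus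
      min_def max_def simp flip: uminus_ereal.simps)

lemma LP_minor_iff_LP_major_uminus:
  "LP_minor a b f V \<longleftrightarrow> LP_major a b (\<lambda>t. - f t) (\<lambda>t. - V t)"
proof -
  have "continuous_on {a..b} (\<lambda>t. - V t) \<longleftrightarrow> continuous_on {a..b} V"
    using continuous_on_minus[of "{a..b}" "\<lambda>t. - V t"] continuous_on_minus[of "{a..b}" V] by auto
  then show ?thesis
    unfolding LP_minor_def LP_major_def upper_LD_eq_uminus_lower_LD
    by (simp add: ereal_uminus_le_reorder ereal_uminus_eq_reorder)
qed

lemma LP_major_restrict:
  assumes x: "a < x" "x \<le> b" and U: "LP_major a b f U"
  shows "LP_major a x f U"
proof -
  have cU: "continuous_on {a..b} U"
    and right: "\<And>y. y \<in> {a..<b} \<Longrightarrow> liminf_at_top_ge (LP_right b U y) (f y)"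
    and left: "\<And>y. y \<in> {a<..b} \<Longrightarrow> liminf_at_top_ge (LP_left a U y) (f y)"
    using U x by (auto simp: LP_major_iff)
  have "liminf_at_top_ge (LP_right x U y) (f y)" if y: "y \<in> {a..<x}" for y
  proof -
    have "continuous_on {y..b} U" using cU y by (auto intro: continuous_on_subset)
    then show ?thesis
      using liminf_at_top_ge_tendsto_diff[OF right tendsto_LP_right_restrict] x y by auto
  qed
  moreover have "continuous_on {a..x} U" using cU x by (auto intro: continuous_on_subset)
  ultimately show ?thesis
    using left x by (auto simp: LP_major_iff)
qed

lemma LP_major_diff:
  fixes Q q :: "real \<Rightarrow> real"
  assumes ab: "a < b" and U: "LP_major a b f U"
    and Q: "\<And>t. t \<in> {a..b} \<Longrightarrow> (Q has_real_derivative q t) (at t within {a..b})"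
  shows "LP_major a b (\<lambda>t. f t - q t) (\<lambda>t. U t - Q t)"
proof -
  have cU: "continuous_on {a..b} U"
    and right: "\<And>y. y \<in> {a..<b} \<Longrightarrow> liminf_at_top_ge (LP_right b U y) (f y)"
    and left: "\<And>y. y \<in> {a<..b} \<Longrightarrow> liminf_at_top_ge (LP_left a U y) (f y)"
    using U ab by (auto simp: LP_major_iff)
  have cQ: "continuous_on {a..b} Q" using Q by (rule DERIV_continuous_on)
  have "liminf_at_top_ge (LP_right b (\<lambda>t. U t - Q t) y) (f y - q y)" if y: "y \<in> {a..<b}" for y
  proof -
    have sub: "{y..b} \<subseteq> {a..b}" using y by auto
    have "((\<lambda>s. LP_right b U y s - LP_right b (\<lambda>t. U t - Q t) y s) \<longlongrightarrow> q y) at_top"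
      using tendsto_LP_right[OF _ continuous_on_subset[OF cQ sub] DERIV_subset[OF Q sub]] y
      by (simp add: LP_right_diff continuous_on_subset[OF cU sub] continuous_on_subset[OF cQ sub])
    then show ?thesis using liminf_at_top_ge_tendsto_diff right y by blast
  qed
  moreover have "liminf_at_top_ge (LP_left a (\<lambda>t. U t - Q t) y) (f y - q y)" if y: "y \<in> {a<..b}" for y
  proof -
    have sub: "{a..y} \<subseteq> {a..b}" using y by auto
    have "((\<lambda>s. LP_left a U y s - LP_left a (\<lambda>t. U t - Q t) y s) \<longlongrightarrow> q y) at_top"
      using tendsto_LP_left[OF _ continuous_on_subset[OF cQ sub] DERIV_subset[OF Q sub]] y
      by (simp add: LP_left_diff continuous_on_subset[OF cU sub] continuous_on_subset[OF cQ sub])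
    then show ?thesis using liminf_at_top_ge_tendsto_diff left y by blast
  qed
  moreover have "continuous_on {a..b} (\<lambda>t. U t - Q t)" using cU cQ by (intro continuous_intros)
  ultimately show ?thesis using ab by (simp add: LP_major_iff)
qed

lemma LP_minor_restrict:
  assumes "a < x" "x \<le> b" "LP_minor a b f V"
  shows "LP_minor a x f V"
  using LP_major_restrict assms by (simp add: LP_minor_iff_LP_major_uminus)

lemma LP_minor_diff:
  fixes Q q :: "real \<Rightarrow> real"
  assumes "a < b" "LP_minor a b f V"
    and Q: "\<And>t. t \<in> {a..b} \<Longrightarrow> (Q has_real_derivative q t) (at t within {a..b})"
  shows "LP_minor a b (\<lambda>t. f t - q t) (\<lambda>t. V t - Q t)"
proof -
  have "((\<lambda>t. - Q t) has_real_derivative - q t) (at t within {a..b})" if "t \<in> {a..b}" for t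
    using Q[OF that] by (rule DERIV_minus)
  moreover have "LP_major a b (\<lambda>t. - f t) (\<lambda>t. - V t)"
    using assms(2) by (simp add: LP_minor_iff_LP_major_uminus)
  ultimately have "LP_major a b (\<lambda>t. - f t - - q t) (\<lambda>t. - V t - - Q t)"
    by (intro LP_major_diff[OF assms(1)])
  then show ?thesis
    unfolding LP_minor_iff_LP_major_uminus by simp
qed

lemma LP_right_nonpos:
  fixes W :: "real \<Rightarrow> real"
  assumes "continuous_on {z..d} W" "\<And>t. t \<in> {z..d} \<Longrightarrow> W t \<le> W z"
  shows "LP_right d W z s \<le> 0"
proof -
  have "LP_right d W z s \<le> Laplace_quot (d - z) (\<lambda>_. 0) s"
    unfolding LP_right_eq_Laplace_quot
    by (intro Laplace_quot_mono continuous_on_LP_right_integrand assms continuous_intros)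
      (use assms(2) in auto)
  then show ?thesis by (simp add: Laplace_quot_def)
qed

lemma mono_on_if_LP_right_pos:
  fixes W :: "real \<Rightarrow> real"
  assumes W: "continuous_on {a..b} W"
    and pos: "\<And>y. y \<in> {a..<b} \<Longrightarrow> \<exists>c>0. \<forall>\<^sub>F s in at_top. c < LP_right b W y s"
  shows "mono_on {a..b} W"
proof (rule mono_onI, rule ccontr)
  fix c d assume cd: "c \<in> {a..b}" "d \<in> {a..b}" "c \<le> d" and "\<not> W c \<le> W d"
  then have Wd: "W d < W c" by simp
  (* z is the last point of [c,d] with W z \<ge> W c; to its right W stays below W z, so the right
     Laplace quotient at z is \<le> 0 up to a vanishing tail. *)
  define S where "S = {c..d} \<inter> W -` {W c..}"
  have "closed S" unfolding S_def
    by (rule continuous_closed_preimage) (use W cd in \<open>auto intro: continuous_on_subset\<close>)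
  moreover have "c \<in> S" "bdd_above S" using cd by (auto simp: S_def)
  ultimately have zS: "Sup S \<in> S" by (intro closed_contains_Sup) auto
  define z where "z = Sup S"
  have z: "a \<le> z" "z < d" using zS Wd cd by (auto simp: S_def z_def less_le)
  have "W t \<le> W z" if "t \<in> {z..d}" for t
  proof (cases "t = z")
    case False
    with that have "t \<notin> S" using cSup_upper[OF _ \<open>bdd_above S\<close>] by (force simp: z_def)
    then show ?thesis using that zS z cd by (auto simp: S_def z_def)
  qed simp
  then have nonpos: "LP_right d W z s \<le> 0" for s
    using W z cd by (intro LP_right_nonpos) (auto intro: continuous_on_subset)
  have Wz: "continuous_on {z..b} W" using W z by (auto intro: continuous_on_subset)
  obtain c0 where c0: "c0 > 0" and above: "\<forall>\<^sub>F s in at_top. c0 < LP_right b W z s"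
    using pos[of z] z cd by auto
  have "\<forall>\<^sub>F s in at_top. LP_right b W z s - LP_right d W z s < c0"
    using order_tendstoD(2)[OF tendsto_LP_right_restrict[OF Wz] c0] z cd by auto
  with above obtain s where "c0 < LP_right b W z s" "LP_right b W z s - LP_right d W z s < c0"
    using eventually_happens'[OF trivial_limit_at_top_linorder eventually_conj] by blast
  with nonpos[of s] show False by simp
qed

lemma mono_on_LP_major_add:
  assumes ab: "a < b" and U: "LP_major a b f U" and V: "LP_major a b (\<lambda>t. - f t) V"
  shows "mono_on {a..b} (\<lambda>x. U x + V x)"
proof -
  have cU: "continuous_on {a..b} U" and cV: "continuous_on {a..b} V"
    using U V ab by (auto simp: LP_major_iff)
  (* The lower Laplace derivates of U + V are only \<ge> 0; the tilt \<epsilon> * x makes them positive. *)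
  have tilted: "mono_on {a..b} (\<lambda>x. U x + V x + \<epsilon> * x)" if \<epsilon>: "\<epsilon> > 0" for \<epsilon>
  proof (rule mono_on_if_LP_right_pos)
    show "continuous_on {a..b} (\<lambda>x. U x + V x + \<epsilon> * x)"
      using cU cV by (intro continuous_intros)
    fix y assume y: "y \<in> {a..<b}"
    have sub: "{y..b} \<subseteq> {a..b}" using y by auto
    have cUy: "continuous_on {y..b} U" and cVy: "continuous_on {y..b} V"
      using continuous_on_subset[OF cU sub] continuous_on_subset[OF cV sub] .
    have "\<forall>\<^sub>F s in at_top. f y - \<epsilon> / 8 < LP_right b U y s"
      using U ab y \<epsilon> by (auto simp: LP_major_iff liminf_at_top_ge_def)
    moreover have "\<forall>\<^sub>F s in at_top. - f y - \<epsilon> / 8 < LP_right b V y s"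
      using V ab y \<epsilon> by (auto simp: LP_major_iff liminf_at_top_ge_def)
    moreover have "(LP_right b (\<lambda>x. \<epsilon> * x) y \<longlongrightarrow> \<epsilon>) at_top"
      using y by (intro tendsto_LP_right continuous_intros derivative_eq_intros) auto
    then have "\<forall>\<^sub>F s in at_top. \<epsilon> / 2 < LP_right b (\<lambda>x. \<epsilon> * x) y s"
      using \<epsilon> by (intro order_tendstoD(1)) auto
    ultimately have "\<forall>\<^sub>F s in at_top. \<epsilon> / 4 < LP_right b (\<lambda>x. U x + V x + \<epsilon> * x) y s"
    proof eventually_elim
      case (elim s)
      have "LP_right b (\<lambda>x. U x + V x + \<epsilon> * x) y s =
          LP_right b U y s + LP_right b V y s + LP_right b (\<lambda>x. \<epsilon> * x) y s"
        using cUy cVy by (simp add: LP_right_add continuous_intros)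
      with elim show ?case by linarith
    qed
    then show "\<exists>c>0. \<forall>\<^sub>F s in at_top. c < LP_right b (\<lambda>x. U x + V x + \<epsilon> * x) y s"
      using \<epsilon> by (intro exI[of _ "\<epsilon> / 4"]) auto
  qed
  show ?thesis
  proof (rule mono_onI)
    fix c d assume cd: "c \<in> {a..b}" "d \<in> {a..b}" "c \<le> d"
    show "U c + V c \<le> U d + V d"
    proof (rule field_le_epsilon)
      fix e :: real assume e: "e > 0"
      define \<epsilon> where "\<epsilon> = e / (d - c + 1)"
      have \<epsilon>: "\<epsilon> > 0" "\<epsilon> * (d - c) \<le> e"
        using e cd by (auto simp: \<epsilon>_def field_simps)
      moreover have "U c + V c + \<epsilon> * c \<le> U d + V d + \<epsilon> * d"
        using mono_onD[OF tilted[OF \<epsilon>(1)] cd] .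
      ultimately show "U c + V c \<le> U d + V d + e"
        unfolding right_diff_distrib by linarith
    qed
  qed
qed

lemma mono_on_LP_major_diff_LP_minor:
  assumes "a < b" "LP_major a b f U" "LP_minor a b f V"
  shows "mono_on {a..b} (\<lambda>x. U x - V x)"
  using mono_on_LP_major_add[of a b f U "\<lambda>t. - V t"] assms
  by (simp add: LP_minor_iff_LP_major_uminus)

section \<open>Integrability\<close>

lemma LP_integral_bounds:
  assumes f: "LP_integrable a b f" and U: "LP_major a b f U" and V: "LP_minor a b f V"
  shows "V b - V a \<le> LP_integral a b f" "LP_integral a b f \<le> U b - U a"
proof -
  obtain r where r: "LP_upper a b f = ereal r" "LP_lower a b f = ereal r"
    using f unfolding LP_integrable_def by (cases "LP_upper a b f") auto
  have "ereal r \<le> ereal (U b - U a)"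
    unfolding r(1)[symmetric] LP_upper_def using U by (auto intro: Inf_lower)
  moreover have "ereal (V b - V a) \<le> ereal r"
    unfolding r(2)[symmetric] LP_lower_def using V by (auto intro: Sup_upper)
  ultimately show "V b - V a \<le> LP_integral a b f" "LP_integral a b f \<le> U b - U a"
    by (simp_all add: LP_integral_def r)
qed

lemma LP_integrable_gap:
  assumes f: "LP_integrable a b f" and \<eta>: "\<eta> > 0"
  obtains U V where "LP_major a b f U" "LP_minor a b f V" "(U b - U a) - (V b - V a) < \<eta>"
proof -
  obtain r where r: "LP_upper a b f = ereal r" "LP_lower a b f = ereal r"
    using f unfolding LP_integrable_def by (cases "LP_upper a b f") auto
  have "Inf ((\<lambda>U. ereal (U b - U a)) ` {U. LP_major a b f U}) < ereal (r + \<eta> / 2)"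
    using r \<eta> unfolding LP_upper_def by simp
  then obtain U where U: "LP_major a b f U" "U b - U a < r + \<eta> / 2"
    unfolding Inf_less_iff by auto
  have "ereal (r - \<eta> / 2) < Sup ((\<lambda>V. ereal (V b - V a)) ` {V. LP_minor a b f V})"
    using r \<eta> unfolding LP_lower_def by simp
  then obtain V where V: "LP_minor a b f V" "r - \<eta> / 2 < V b - V a"
    unfolding less_Sup_iff by auto
  show ?thesis
    by (rule that[OF U(1) V(1)]) (use U(2) V(2) in linarith)
qed

lemma LP_integrableI_gap:
  assumes ab: "a < b"
    and gap: "\<And>\<eta>. \<eta> > 0 \<Longrightarrow>
      \<exists>U V. LP_major a b f U \<and> LP_minor a b f V \<and> (U b - U a) - (V b - V a) < \<eta>"
  shows "LP_integrable a b f"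
proof -
  have ordered: "V b - V a \<le> U b - U a" if "LP_major a b f U" "LP_minor a b f V" for U V
    using mono_onD[OF mono_on_LP_major_diff_LP_minor[OF ab that], of a b] ab by simp
  have le: "LP_lower a b f \<le> LP_upper a b f"
    unfolding LP_lower_def LP_upper_def Sup_le_iff le_Inf_iff using ordered by auto
  have ge: "LP_upper a b f \<le> LP_lower a b f"
  proof (rule ereal_le_epsilon2)
    fix \<eta> :: real assume "\<eta> > 0"
    then obtain U V where UV: "LP_major a b f U" "LP_minor a b f V" "(U b - U a) - (V b - V a) < \<eta>"
      using gap by blast
    have "LP_upper a b f \<le> ereal (U b - U a)"
      unfolding LP_upper_def using UV by (auto intro: Inf_lower)
    also have "\<dots> \<le> ereal (V b - V a) + ereal \<eta>" using UV(3) by simp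
    also have "ereal (V b - V a) \<le> LP_lower a b f"
      unfolding LP_lower_def using UV by (auto intro: Sup_upper)
    finally show "LP_upper a b f \<le> LP_lower a b f + ereal \<eta>" by (simp add: add_right_mono)
  qed
  obtain U V where "LP_major a b f U" "LP_minor a b f V"
    using gap[of 1] by auto
  then have "LP_upper a b f \<le> ereal (U b - U a)" "ereal (V b - V a) \<le> LP_lower a b f"
    unfolding LP_upper_def LP_lower_def by (auto intro: Inf_lower Sup_upper)
  with le ge show ?thesis
    unfolding LP_integrable_def by (cases "LP_upper a b f") auto
qed

lemma LP_integrable_restrict:
  assumes x: "a < x" "x \<le> b" and f: "LP_integrable a b f"
  shows "LP_integrable a x f"
proof (rule LP_integrableI_gap[OF x(1)])
  fix \<eta> :: real assume "\<eta> > 0"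
  with f obtain U V where UV: "LP_major a b f U" "LP_minor a b f V" "(U b - U a) - (V b - V a) < \<eta>"
    by (rule LP_integrable_gap)
  have "U x - V x \<le> U b - V b"
    using mono_onD[OF mono_on_LP_major_diff_LP_minor[OF _ UV(1,2)]] x by auto
  with UV x show "\<exists>U V. LP_major a x f U \<and> LP_minor a x f V \<and> (U x - U a) - (V x - V a) < \<eta>"
    by (intro exI[of _ U] exI[of _ V] conjI LP_major_restrict[OF x UV(1)] LP_minor_restrict[OF x UV(2)])
      auto
qed

lemma LP_integrable_diff:
  fixes Q q :: "real \<Rightarrow> real"
  assumes ab: "a < b" and f: "LP_integrable a b f"
    and Q: "\<And>t. t \<in> {a..b} \<Longrightarrow> (Q has_real_derivative q t) (at t within {a..b})"
  shows "LP_integrable a b (\<lambda>t. f t - q t)"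
proof (rule LP_integrableI_gap[OF ab])
  fix \<eta> :: real assume "\<eta> > 0"
  with f obtain U V where UV: "LP_major a b f U" "LP_minor a b f V" "(U b - U a) - (V b - V a) < \<eta>"
    by (rule LP_integrable_gap)
  then show "\<exists>U V. LP_major a b (\<lambda>t. f t - q t) U \<and> LP_minor a b (\<lambda>t. f t - q t) V \<and>
      (U b - U a) - (V b - V a) < \<eta>"
    by (intro exI[of _ "\<lambda>t. U t - Q t"] exI[of _ "\<lambda>t. V t - Q t"] conjI
        LP_major_diff[OF ab UV(1) Q] LP_minor_diff[OF ab UV(2) Q]) auto
qed

lemma real_polynomial_function_imp_poly:
  fixes g :: "real \<Rightarrow> real"
  assumes "real_polynomial_function g"
  shows "\<exists>p. g = poly p"
  using assms
proof induction
  case (linear f)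
  then obtain c where "f = (\<lambda>x. x * c)" using real_bounded_linear by blast
  then show ?case by (intro exI[of _ "[:0, c:]"]) auto
next
  case (const c)
  show ?case by (intro exI[of _ "[:c:]"]) auto
next
  case (add f g)
  then obtain p q where "f = poly p" "g = poly q" by blast
  then show ?case by (intro exI[of _ "p + q"]) auto
next
  case (mult f g)
  then obtain p q where "f = poly p" "g = poly q" by blast
  then show ?case by (intro exI[of _ "p * q"]) auto
qed

lemma Stone_Weierstrass_poly:
  fixes U :: "real \<Rightarrow> real"
  assumes "continuous_on {a..b} U" "e > 0"
  obtains P where "\<And>x. x \<in> {a..b} \<Longrightarrow> \<bar>U x - poly P x\<bar> < e"
proof -
  obtain g where "real_polynomial_function g" "\<And>x. x \<in> {a..b} \<Longrightarrow> \<bar>U x - g x\<bar> < e"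
    using Stone_Weierstrass_real_polynomial_function[OF compact_Icc assms] by blast
  with real_polynomial_function_imp_poly that show ?thesis by blast
qed

theorem theorem5p11:
  fixes a b :: real and f :: "real \<Rightarrow> real" and \<epsilon> :: real
  assumes "a < b" and "LP_integrable a b f" and "\<epsilon> > 0"
  shows "\<exists>p :: real poly.
           (\<forall>x\<in>{a<..b}. LP_integrable a x (\<lambda>t. f t - poly p t)) \<and>
           (\<forall>x\<in>{a<..b}. \<bar>LP_integral a x (\<lambda>t. f t - poly p t)\<bar> \<le> \<epsilon>)"
proof -
  obtain U V where U: "LP_major a b f U" and V: "LP_minor a b f V"
    and gap: "(U b - U a) - (V b - V a) < \<epsilon> / 2"
    by (rule LP_integrable_gap[OF assms(2) half_gt_zero[OF assms(3)]])
  have "continuous_on {a..b} U" using U assms(1) by (simp add: LP_major_iff)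
  then obtain P where P: "\<And>x. x \<in> {a..b} \<Longrightarrow> \<bar>U x - poly P x\<bar> < \<epsilon> / 4"
    by (rule Stone_Weierstrass_poly[where e = "\<epsilon> / 4"]) (use assms(3) in auto)
  have P': "(poly P has_real_derivative poly (pderiv P) t) (at t within S)" for t S
    by (rule has_field_derivative_at_within[OF poly_DERIV])
  have "LP_integrable a x (\<lambda>t. f t - poly (pderiv P) t) \<and>
      \<bar>LP_integral a x (\<lambda>t. f t - poly (pderiv P) t)\<bar> \<le> \<epsilon>" if x: "a < x" "x \<le> b" for x
  proof
    show int: "LP_integrable a x (\<lambda>t. f t - poly (pderiv P) t)"
      using LP_integrable_diff[OF x(1) LP_integrable_restrict[OF x assms(2)] P'] .
    have "(V x - poly P x) - (V a - poly P a) \<le> LP_integral a x (\<lambda>t. f t - poly (pderiv P) t)"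
      "LP_integral a x (\<lambda>t. f t - poly (pderiv P) t) \<le> (U x - poly P x) - (U a - poly P a)"
      using LP_integral_bounds[OF int LP_major_diff[OF x(1) LP_major_restrict[OF x U] P']
          LP_minor_diff[OF x(1) LP_minor_restrict[OF x V] P']] .
    moreover have "U x - V x \<le> U b - V b"
      using mono_onD[OF mono_on_LP_major_diff_LP_minor[OF assms(1) U V]] x by auto
    moreover have "\<bar>U x - poly P x\<bar> < \<epsilon> / 4" "\<bar>U a - poly P a\<bar> < \<epsilon> / 4"
      using P x by auto
    ultimately show "\<bar>LP_integral a x (\<lambda>t. f t - poly (pderiv P) t)\<bar> \<le> \<epsilon>"
      using gap by linarith
  qed
  then show ?thesis by (intro exI[of _ "pderiv P"]) auto
qed

end
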